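(* Let $H$ be a simple, strongly connected digraph with at least one arc, let $k$ be a positive integer, and let $c\ge 0$. Let $T$ be a tournament with $\mathrm{ctw}(T)\le c$ that does not contain $k$ pairwise vertex-disjoint immersion copies of $H$. Then there is a set $F$ of at most $2(k-1)c$ arcs of $T$ such that $T-F$ does not contain $H$ as an immersion.
   Context: A tournament is a simple digraph with exactly one arc between every pair of distinct vertices. An immersion copy of $H$ in a digraph $G$ is a subgraph $\widehat H$ of $G$ with a map sending vertices of $H$ to distinct vertices of $\widehat H$ and each arc $(u,v)$ of $H$ to a directed path from the image of $u$ to the image of $v$, such that each arc of $\widehat H$ lies on exactly one of these paths; $G$ contains $H$ as an immersion if it has such a subgraph. For an ordering $\sigma$ (bijection $V(T)\to[|V(T)|]$) and $\alpha\in\{0,\dots,|V(T)|\}$, the $\alpha$-cut is the set of arcs $(u,v)$ with $\sigma(u)>\alpha\ge\sigma(v)$; the width of $\sigma$ is the maximum size of its cuts, and the cutwidth $\mathrm{ctw}(T)$ is the minimum width of an ordering. *)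

theory Defs
  imports Main
begin

text \<open>A digraph is a pair (V, A) of a vertex set and an arc set A \<subseteq> V \<times> V.
 Simple: finite, no loops (arcs form a set, so no parallel arcs).\<close>

definition simple_digraph :: "'a set \<Rightarrow> ('a \<times> 'a) set \<Rightarrow> bool" where
  "simple_digraph V A \<longleftrightarrow> finite V \<and> A \<subseteq> V \<times> V \<and> (\<forall>v. (v, v) \<notin> A)"

definition strongly_connected :: "'a set \<Rightarrow> ('a \<times> 'a) set \<Rightarrow> bool" where
  "strongly_connected V A \<longleftrightarrow> (\<forall>u\<in>V. \<forall>v\<in>V. (u, v) \<in> A\<^sup>*)"

definition tournament :: "'a set \<Rightarrow> ('a \<times> 'a) set \<Rightarrow> bool" where
  "tournament V A \<longleftrightarrow> simple_digraph V A \<and>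
     (\<forall>u\<in>V. \<forall>v\<in>V. u \<noteq> v \<longrightarrow> ((u, v) \<in> A \<longleftrightarrow> (v, u) \<notin> A))"

definition dipath :: "('a \<times> 'a) set \<Rightarrow> 'a list \<Rightarrow> 'a \<Rightarrow> 'a \<Rightarrow> bool" where
  "dipath B xs u v \<longleftrightarrow> xs \<noteq> [] \<and> distinct xs \<and> hd xs = u \<and> last xs = v \<and>
     (\<forall>i. Suc i < length xs \<longrightarrow> (xs ! i, xs ! Suc i) \<in> B)"

definition path_arcs :: "'a list \<Rightarrow> ('a \<times> 'a) set" where
  "path_arcs xs = set (zip xs (tl xs))"

definition immersion_copy ::
  "'b set \<Rightarrow> ('b \<times> 'b) set \<Rightarrow> 'a set \<Rightarrow> ('a \<times> 'a) set \<Rightarrow> 'a set \<Rightarrow> ('a \<times> 'a) set \<Rightarrow> bool" where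
  "immersion_copy VH AH V A W B \<longleftrightarrow>
     W \<subseteq> V \<and> B \<subseteq> A \<and> B \<subseteq> W \<times> W \<and>
     (\<exists>(\<phi> :: 'b \<Rightarrow> 'a) (P :: 'b \<times> 'b \<Rightarrow> 'a list).
        inj_on \<phi> VH \<and> \<phi> ` VH \<subseteq> W \<and>
        (\<forall>(x, y)\<in>AH. dipath B (P (x, y)) (\<phi> x) (\<phi> y)) \<and>
        (\<forall>b\<in>B. \<exists>!e. e \<in> AH \<and> b \<in> path_arcs (P e)))"

definition contains_immersion ::
  "'b set \<Rightarrow> ('b \<times> 'b) set \<Rightarrow> 'a set \<Rightarrow> ('a \<times> 'a) set \<Rightarrow> bool" where
  "contains_immersion VH AH V A \<longleftrightarrow> (\<exists>W B. immersion_copy VH AH V A W B)"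

definition contains_disjoint_immersions ::
  "nat \<Rightarrow> 'b set \<Rightarrow> ('b \<times> 'b) set \<Rightarrow> 'a set \<Rightarrow> ('a \<times> 'a) set \<Rightarrow> bool" where
  "contains_disjoint_immersions k VH AH V A \<longleftrightarrow>
     (\<exists>(Ws :: nat \<Rightarrow> 'a set) Bs. (\<forall>i<k. immersion_copy VH AH V A (Ws i) (Bs i)) \<and>
        (\<forall>i<k. \<forall>j<k. i \<noteq> j \<longrightarrow> Ws i \<inter> Ws j = {}))"

definition cut :: "('a \<times> 'a) set \<Rightarrow> ('a \<Rightarrow> nat) \<Rightarrow> nat \<Rightarrow> ('a \<times> 'a) set" where
  "cut A \<sigma> \<alpha> = {(u, v) \<in> A. \<sigma> u > \<alpha> \<and> \<alpha> \<ge> \<sigma> v}"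

definition ordering_width :: "'a set \<Rightarrow> ('a \<times> 'a) set \<Rightarrow> ('a \<Rightarrow> nat) \<Rightarrow> nat" where
  "ordering_width V A \<sigma> = Max ((\<lambda>\<alpha>. card (cut A \<sigma> \<alpha>)) ` {0..card V})"

definition cutwidth :: "'a set \<Rightarrow> ('a \<times> 'a) set \<Rightarrow> nat" where
  "cutwidth V A = Min {ordering_width V A \<sigma> | \<sigma>. bij_betw \<sigma> V {1..card V}}"

end

theory Submission
  imports Defs
begin

(* Fix an ordering \<sigma> of T of width at most c and argue greedily from the left.
   An immersion copy of the strongly connected digraph H is itself strongly connected
   on the vertices it uses, so if it avoids the arcs of a cut it lies entirely on one
   side of that cut. Let a be the least position such that some copy lies within the
   positions (l, a]. Deleting the at most 2c arcs of the cuts at a - 1 and a, every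
   surviving copy lies strictly before a (impossible by the choice of a), strictly
   after a, or at position a alone (impossible: a single vertex carries no arc).
   The positions after a contain one disjoint copy fewer than those after l, since
   the copy in (l, a] can be added to them, so induction on k finishes the proof. *)

lemma chain_nth_rtrancl:
  assumes chain: "\<forall>i. Suc i < length xs \<longrightarrow> (xs ! i, xs ! Suc i) \<in> B"
    and "i \<le> j" "j < length xs"
  shows "(xs ! i, xs ! j) \<in> B\<^sup>*"
  using assms(2,3)
proof (induction j rule: dec_induct)
  case (step n)
  then show ?case using chain by (meson Suc_lessD rtrancl_into_rtrancl)
qed simp

lemma dipath_rtrancl:
  assumes "dipath B xs u v" "x \<in> set xs"
  shows "(u, x) \<in> B\<^sup>*" "(x, v) \<in> B\<^sup>*"
proof -
  obtain i where i: "i < length xs" "x = xs ! i" using assms(2) by (auto simp: in_set_conv_nth)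
  have chain: "\<forall>i. Suc i < length xs \<longrightarrow> (xs ! i, xs ! Suc i) \<in> B"
    and ends: "xs ! 0 = u" "xs ! (length xs - 1) = v"
    using assms(1) by (auto simp: dipath_def hd_conv_nth last_conv_nth)
  show "(u, x) \<in> B\<^sup>*" using chain_nth_rtrancl[OF chain, of 0 i] i ends by simp
  show "(x, v) \<in> B\<^sup>*" using chain_nth_rtrancl[OF chain, of i "length xs - 1"] i ends by simp
qed

lemma dipath_imp_rtrancl: "dipath B xs u v \<Longrightarrow> (u, v) \<in> B\<^sup>*"
  by (metis dipath_def dipath_rtrancl(1) last_in_set)

lemma dipath_first_arc:
  assumes "dipath B xs u v" "u \<noteq> v"
  obtains w where "(u, w) \<in> B"
proof (cases xs)
  case (Cons x ys)
  with assms obtain w zs where "ys = w # zs" by (cases ys) (auto simp: dipath_def)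
  with assms(1) Cons have "(u, w) \<in> B" unfolding dipath_def by force
  then show ?thesis by (rule that)
qed (use assms in \<open>simp add: dipath_def\<close>)

lemma path_arcs_endpoints: "(x, y) \<in> path_arcs xs \<Longrightarrow> x \<in> set xs \<and> y \<in> set xs"
  unfolding path_arcs_def by (cases xs) (auto dest: set_zip_leftD set_zip_rightD)

lemma immersion_copyE:
  assumes "immersion_copy VH AH V A W B"
  obtains \<phi> P where "W \<subseteq> V" "B \<subseteq> A" "B \<subseteq> W \<times> W" "inj_on \<phi> VH" "\<phi> ` VH \<subseteq> W"
    "\<And>x y. (x, y) \<in> AH \<Longrightarrow> dipath B (P (x, y)) (\<phi> x) (\<phi> y)"
    "\<And>b. b \<in> B \<Longrightarrow> \<exists>!e. e \<in> AH \<and> b \<in> path_arcs (P e)"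
  using assms unfolding immersion_copy_def by fast

lemma immersion_copy_subsets:
  assumes "immersion_copy VH AH V A W B"
  shows "W \<subseteq> V" "B \<subseteq> A" "B \<subseteq> W \<times> W"
  using assms unfolding immersion_copy_def by blast+

lemma immersion_copy_change_host:
  "immersion_copy VH AH V A W B \<Longrightarrow> W \<subseteq> V' \<Longrightarrow> B \<subseteq> A' \<Longrightarrow> immersion_copy VH AH V' A' W B"
  unfolding immersion_copy_def by blast

lemma immersion_copy_mono:
  "immersion_copy VH AH V A W B \<Longrightarrow> V \<subseteq> V' \<Longrightarrow> A \<subseteq> A' \<Longrightarrow> immersion_copy VH AH V' A' W B"
  by (meson immersion_copy_change_host immersion_copy_subsets order_trans)

lemma immersion_copy_nonempty:
  "immersion_copy VH AH V A W B \<Longrightarrow> VH \<noteq> {} \<Longrightarrow> W \<noteq> {}"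
  by (elim immersion_copyE) auto

lemma strongly_connected_out_arc:
  assumes "simple_digraph VH AH" "strongly_connected VH AH" "AH \<noteq> {}" "x \<in> VH"
  obtains y where "(x, y) \<in> AH"
proof -
  obtain a b where "(a, b) \<in> AH" using assms(3) by auto
  with assms(1) obtain y where y: "y \<in> VH" "y \<noteq> x" unfolding simple_digraph_def by auto
  with assms(2,4) have "(x, y) \<in> AH\<^sup>*" unfolding strongly_connected_def by auto
  with y(2) show ?thesis by (metis converse_rtranclE that)
qed

lemma immersion_copy_Field:
  assumes H: "simple_digraph VH AH" "strongly_connected VH AH" "AH \<noteq> {}"
    and "immersion_copy VH AH V A W B"
  shows "immersion_copy VH AH V A (Field B) B"
proof -
  obtain \<phi> P where copy: "W \<subseteq> V" "B \<subseteq> A" "B \<subseteq> W \<times> W" "inj_on \<phi> VH" "\<phi> ` VH \<subseteq> W"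
    and paths: "\<And>x y. (x, y) \<in> AH \<Longrightarrow> dipath B (P (x, y)) (\<phi> x) (\<phi> y)"
    and unique: "\<And>b. b \<in> B \<Longrightarrow> \<exists>!e. e \<in> AH \<and> b \<in> path_arcs (P e)"
    using assms(4) by (rule immersion_copyE) blast
  have FW: "Field B \<subseteq> W" using copy(3) unfolding Field_def by auto
  have "\<phi> x \<in> Field B" if x: "x \<in> VH" for x
  proof -
    obtain y where xy: "(x, y) \<in> AH" using strongly_connected_out_arc[OF H x] .
    with H(1) x have "\<phi> x \<noteq> \<phi> y" using copy(4) unfolding simple_digraph_def inj_on_def by blast
    with paths[OF xy] obtain w where "(\<phi> x, w) \<in> B" by (rule dipath_first_arc)
    then show ?thesis by (rule FieldI1)
  qed
  then have "\<phi> ` VH \<subseteq> Field B" by blast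
  with copy FW paths unique show ?thesis
    unfolding immersion_copy_def
    by (intro conjI exI[of _ \<phi>] exI[of _ P]) (auto intro: FieldI1 FieldI2)
qed

lemma immersion_copy_strongly_connected:
  assumes "AH \<subseteq> VH \<times> VH" "strongly_connected VH AH" "immersion_copy VH AH V A W B"
  shows "strongly_connected (Field B) B"
proof -
  obtain \<phi> P where "W \<subseteq> V" "B \<subseteq> A" "B \<subseteq> W \<times> W" "inj_on \<phi> VH" "\<phi> ` VH \<subseteq> W"
    and paths: "\<And>x y. (x, y) \<in> AH \<Longrightarrow> dipath B (P (x, y)) (\<phi> x) (\<phi> y)"
    and unique: "\<And>b. b \<in> B \<Longrightarrow> \<exists>!e. e \<in> AH \<and> b \<in> path_arcs (P e)"
    using assms(3) by (rule immersion_copyE) blast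
  have lift: "(\<phi> p, \<phi> q) \<in> B\<^sup>*" if "(p, q) \<in> AH\<^sup>*" for p q
    using that
  proof (induction rule: rtrancl_induct)
    case (step y z)
    from step.IH dipath_imp_rtrancl[OF paths[OF step(2)]] show ?case by (rule rtrancl_trans)
  qed simp
  have through: "\<exists>p q. (p, q) \<in> AH \<and> (\<phi> p, z) \<in> B\<^sup>* \<and> (z, \<phi> q) \<in> B\<^sup>*"
    if zB: "z \<in> Field B" for z
  proof -
    obtain u v where uv: "(u, v) \<in> B" "z = u \<or> z = v" using zB unfolding Field_def by blast
    obtain p q where pq: "(p, q) \<in> AH" "(u, v) \<in> path_arcs (P (p, q))"
      using ex1_implies_ex[OF unique[OF uv(1)]] by auto
    with uv(2) have "z \<in> set (P (p, q))" by (auto dest: path_arcs_endpoints)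
    with pq(1) show ?thesis using dipath_rtrancl[OF paths[OF pq(1)]] by blast
  qed
  show ?thesis unfolding strongly_connected_def
  proof (intro ballI)
    fix x y assume "x \<in> Field B" "y \<in> Field B"
    obtain p q where q: "(p, q) \<in> AH" "(x, \<phi> q) \<in> B\<^sup>*"
      using through[OF \<open>x \<in> Field B\<close>] by blast
    obtain p' q' where p': "(p', q') \<in> AH" "(\<phi> p', y) \<in> B\<^sup>*"
      using through[OF \<open>y \<in> Field B\<close>] by blast
    from q(1) p'(1) assms(1,2) have "(q, p') \<in> AH\<^sup>*" unfolding strongly_connected_def by blast
    with q(2) p'(2) show "(x, y) \<in> B\<^sup>*" by (meson lift rtrancl_trans)
  qed
qed

lemma contains_immersion_strongly_connected_copy:
  assumes "simple_digraph VH AH" "strongly_connected VH AH" "AH \<noteq> {}"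
    and "contains_immersion VH AH V A"
  obtains B where "immersion_copy VH AH V A (Field B) B" "B \<noteq> {}" "strongly_connected (Field B) B"
proof -
  obtain W B where copy: "immersion_copy VH AH V A W B"
    using assms(4) unfolding contains_immersion_def by blast
  have "VH \<noteq> {}" using assms(1,3) unfolding simple_digraph_def by blast
  moreover have Field_copy: "immersion_copy VH AH V A (Field B) B"
    by (rule immersion_copy_Field[OF assms(1-3) copy])
  ultimately have "B \<noteq> {}" using immersion_copy_nonempty by fastforce
  moreover have "strongly_connected (Field B) B"
    using assms(1,2) copy by (auto intro: immersion_copy_strongly_connected simp: simple_digraph_def)
  ultimately show ?thesis using Field_copy that by blast
qed

lemma contains_immersion_mono:
  "contains_immersion VH AH V A \<Longrightarrow> V \<subseteq> V' \<Longrightarrow> A \<subseteq> A' \<Longrightarrow> contains_immersion VH AH V' A'"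
  unfolding contains_immersion_def by (meson immersion_copy_mono)

lemma contains_immersion_nonempty:
  "contains_immersion VH AH V A \<Longrightarrow> VH \<noteq> {} \<Longrightarrow> V \<noteq> {}"
  unfolding contains_immersion_def by (metis immersion_copy_nonempty immersion_copy_subsets(1) subset_empty)

lemma contains_disjoint_immersions_0: "contains_disjoint_immersions 0 VH AH V A"
  unfolding contains_disjoint_immersions_def by simp

lemma contains_disjoint_immersions_SucI:
  assumes "contains_disjoint_immersions m VH AH S A" "contains_immersion VH AH T A"
    and "S \<inter> T = {}" "S \<subseteq> U" "T \<subseteq> U"
  shows "contains_disjoint_immersions (Suc m) VH AH U A"
proof -
  obtain Ws Bs where copies: "\<forall>i<m. immersion_copy VH AH S A (Ws i) (Bs i)"
    and disjoint: "\<forall>i<m. \<forall>j<m. i \<noteq> j \<longrightarrow> Ws i \<inter> Ws j = {}"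
    using assms(1) unfolding contains_disjoint_immersions_def by blast
  obtain W B where copy: "immersion_copy VH AH T A W B"
    using assms(2) unfolding contains_immersion_def by blast
  have "Ws i \<subseteq> S" if "i < m" for i using copies that immersion_copy_subsets(1) by blast
  moreover have "W \<subseteq> T" using copy by (rule immersion_copy_subsets)
  ultimately have "\<forall>i<Suc m. \<forall>j<Suc m. i \<noteq> j \<longrightarrow> (Ws(m := W)) i \<inter> (Ws(m := W)) j = {}"
    using disjoint assms(3) by (auto simp: less_Suc_eq) blast+
  moreover have "\<forall>i<Suc m. immersion_copy VH AH U A ((Ws(m := W)) i) ((Bs(m := B)) i)"
    using copies copy assms(4,5)
    by (auto simp: less_Suc_eq elim: immersion_copy_mono)
  ultimately show ?thesis unfolding contains_disjoint_immersions_def by blast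
qed

lemma cut_subset: "cut A \<sigma> \<alpha> \<subseteq> A"
  unfolding cut_def by blast

lemma rtrancl_avoiding_cut_stays_above:
  assumes "(y, x) \<in> B\<^sup>*" "B \<subseteq> A" "B \<inter> cut A \<sigma> \<alpha> = {}" "\<alpha> < \<sigma> y"
  shows "\<alpha> < \<sigma> x"
  using assms(1,4)
proof (induction rule: rtrancl_induct)
  case (step u v)
  show ?case
  proof (rule ccontr)
    assume "\<not> \<alpha> < \<sigma> v"
    with step assms(2) have "(u, v) \<in> B \<inter> cut A \<sigma> \<alpha>" unfolding cut_def by auto
    with assms(3) show False by blast
  qed
qed

lemma strongly_connected_avoiding_cut:
  assumes "strongly_connected U B" "B \<subseteq> A" "B \<inter> cut A \<sigma> \<alpha> = {}"
  shows "(\<forall>x\<in>U. \<sigma> x \<le> \<alpha>) \<or> (\<forall>x\<in>U. \<alpha> < \<sigma> x)"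
proof (cases "\<exists>y\<in>U. \<alpha> < \<sigma> y")
  case True
  then obtain y where "y \<in> U" "\<alpha> < \<sigma> y" by blast
  with assms have "\<forall>x\<in>U. \<alpha> < \<sigma> x"
    unfolding strongly_connected_def by (blast intro: rtrancl_avoiding_cut_stays_above)
  then show ?thesis ..
qed (simp add: not_less)

lemma strongly_connected_avoiding_adjacent_cuts:
  assumes sc: "strongly_connected (Field B) B" and "B \<noteq> {}" "B \<subseteq> A"
    and avoid: "B \<inter> cut A \<sigma> a = {}" "B \<inter> cut A \<sigma> (a - 1) = {}"
    and "Field B \<subseteq> V" "inj_on \<sigma> V" "\<And>v. (v, v) \<notin> A" "0 < a"
  shows "(\<forall>x\<in>Field B. a < \<sigma> x) \<or> (\<forall>x\<in>Field B. \<sigma> x < a)"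
proof -
  obtain u v where uv: "(u, v) \<in> B" using \<open>B \<noteq> {}\<close> by auto
  with assms(3,6-8) have "\<sigma> u \<noteq> \<sigma> v" by (metis FieldI1 FieldI2 inj_onD subsetD)
  with uv have not_const: "\<not> (\<forall>x\<in>Field B. \<sigma> x = a)" by (metis FieldI1 FieldI2)
  from strongly_connected_avoiding_cut[OF sc \<open>B \<subseteq> A\<close> avoid(2)] show ?thesis
  proof (elim disjE)
    assume "\<forall>x\<in>Field B. \<sigma> x \<le> a - 1"
    with \<open>0 < a\<close> show ?thesis by auto
  next
    assume above: "\<forall>x\<in>Field B. a - 1 < \<sigma> x"
    from strongly_connected_avoiding_cut[OF sc \<open>B \<subseteq> A\<close> avoid(1)] show ?thesis
    proof (elim disjE)
      assume "\<forall>x\<in>Field B. \<sigma> x \<le> a"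
      with above not_const show ?thesis by force
    qed simp
  qed
qed

lemma no_immersion_after_cutting_at:
  assumes H: "simple_digraph VH AH" "strongly_connected VH AH" "AH \<noteq> {}"
    and "inj_on \<sigma> V" "\<And>v. (v, v) \<notin> A" "0 < a"
    and below: "\<not> contains_immersion VH AH {v \<in> V. l < \<sigma> v \<and> \<sigma> v < a} A"
    and above: "\<not> contains_immersion VH AH {v \<in> V. a < \<sigma> v} (A - F)"
  shows "\<not> contains_immersion VH AH {v \<in> V. l < \<sigma> v} (A - (F \<union> cut A \<sigma> a \<union> cut A \<sigma> (a - 1)))"
    (is "\<not> contains_immersion _ _ ?S (A - ?F)")
proof
  assume "contains_immersion VH AH ?S (A - ?F)"
  then obtain B where copy: "immersion_copy VH AH ?S (A - ?F) (Field B) B"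
    and "B \<noteq> {}" "strongly_connected (Field B) B"
    by (rule contains_immersion_strongly_connected_copy[OF H])
  have FB: "Field B \<subseteq> ?S" and BA: "B \<subseteq> A - ?F"
    using immersion_copy_subsets[OF copy] by auto
  then have "(\<forall>x\<in>Field B. a < \<sigma> x) \<or> (\<forall>x\<in>Field B. \<sigma> x < a)"
    using strongly_connected_avoiding_adjacent_cuts[of B A \<sigma> a V] assms(4-6)
      \<open>B \<noteq> {}\<close> \<open>strongly_connected (Field B) B\<close> by blast
  then show False
  proof (elim disjE)
    assume "\<forall>x\<in>Field B. a < \<sigma> x"
    with FB BA have "immersion_copy VH AH {v \<in> V. a < \<sigma> v} (A - F) (Field B) B"
      by (auto intro: immersion_copy_change_host[OF copy])
    with above show False unfolding contains_immersion_def by blast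
  next
    assume "\<forall>x\<in>Field B. \<sigma> x < a"
    with FB BA have "immersion_copy VH AH {v \<in> V. l < \<sigma> v \<and> \<sigma> v < a} A (Field B) B"
      by (auto intro: immersion_copy_change_host[OF copy])
    with below show False unfolding contains_immersion_def by blast
  qed
qed

lemma immersion_hitting_set_above:
  assumes H: "simple_digraph VH AH" "strongly_connected VH AH" "AH \<noteq> {}"
    and "finite V" "inj_on \<sigma> V" "\<And>v. (v, v) \<notin> A" "\<And>\<alpha>. card (cut A \<sigma> \<alpha>) \<le> c"
    and "\<not> contains_disjoint_immersions (Suc m) VH AH {v \<in> V. l < \<sigma> v} A"
  shows "\<exists>F\<subseteq>A. card F \<le> 2 * m * c \<and> \<not> contains_immersion VH AH {v \<in> V. l < \<sigma> v} (A - F)"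
  using assms(8)
proof (induction m arbitrary: l)
  case 0
  have "\<not> contains_immersion VH AH {v \<in> V. l < \<sigma> v} A"
    using contains_disjoint_immersions_SucI[OF contains_disjoint_immersions_0] 0 by blast
  then show ?case by (intro exI[of _ "{}"]) simp
next
  case (Suc m)
  show ?case
  proof (cases "contains_immersion VH AH {v \<in> V. l < \<sigma> v} A")
    case False
    then show ?thesis by (intro exI[of _ "{}"]) simp
  next
    case True
    let ?P = "\<lambda>r. contains_immersion VH AH {v \<in> V. l < \<sigma> v \<and> \<sigma> v \<le> r} A"
    define a where "a = (LEAST r. ?P r)"
    have "?P (Max (\<sigma> ` V))"
      using True \<open>finite V\<close> by (elim contains_immersion_mono) auto
    then have Pa: "?P a" unfolding a_def by (rule LeastI)
    have minimal: "\<not> ?P r" if "r < a" for r using not_less_Least[OF that[unfolded a_def]] .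
    have "VH \<noteq> {}" using H(1,3) unfolding simple_digraph_def by blast
    with contains_immersion_nonempty[OF Pa] have "l < a" by auto
    have "\<not> contains_disjoint_immersions (Suc m) VH AH {v \<in> V. a < \<sigma> v} A"
    proof
      assume "contains_disjoint_immersions (Suc m) VH AH {v \<in> V. a < \<sigma> v} A"
      then have "contains_disjoint_immersions (Suc (Suc m)) VH AH {v \<in> V. l < \<sigma> v} A"
        by (rule contains_disjoint_immersions_SucI[OF _ Pa]) (use \<open>l < a\<close> in auto)
      with Suc.prems show False ..
    qed
    then obtain F where F: "F \<subseteq> A" "card F \<le> 2 * m * c"
      and no_above: "\<not> contains_immersion VH AH {v \<in> V. a < \<sigma> v} (A - F)"
      using Suc.IH by blast
    have "{v \<in> V. l < \<sigma> v \<and> \<sigma> v < a} = {v \<in> V. l < \<sigma> v \<and> \<sigma> v \<le> a - 1}"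
      using \<open>l < a\<close> by auto
    then have no_below: "\<not> contains_immersion VH AH {v \<in> V. l < \<sigma> v \<and> \<sigma> v < a} A"
      using minimal[of "a - 1"] \<open>l < a\<close> by simp
    let ?F = "F \<union> cut A \<sigma> a \<union> cut A \<sigma> (a - 1)"
    have "card ?F \<le> card F + card (cut A \<sigma> a) + card (cut A \<sigma> (a - 1))"
      by (rule order_trans[OF card_Un_le add_right_mono[OF card_Un_le]])
    also have "\<dots> \<le> 2 * Suc m * c" using F(2) assms(7)[of a] assms(7)[of "a - 1"] by simp
    finally have "card ?F \<le> 2 * Suc m * c" .
    moreover have "?F \<subseteq> A" using F(1) cut_subset by blast
    moreover have "\<not> contains_immersion VH AH {v \<in> V. l < \<sigma> v} (A - ?F)"
      using no_immersion_after_cutting_at[OF H assms(5,6) _ no_below no_above] \<open>l < a\<close> by simp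
    ultimately show ?thesis by blast
  qed
qed

lemma card_cut_le_ordering_width:
  assumes "bij_betw \<sigma> V {1..card V}" "A \<subseteq> V \<times> V"
  shows "card (cut A \<sigma> \<alpha>) \<le> ordering_width V A \<sigma>"
proof (cases "\<alpha> \<le> card V")
  case True
  then show ?thesis unfolding ordering_width_def by (intro Max_ge) auto
next
  case False
  have "\<sigma> u \<le> card V" if "u \<in> V" for u using bij_betw_apply[OF assms(1) that] by simp
  with False assms(2) have "cut A \<sigma> \<alpha> = {}" unfolding cut_def by fastforce
  then show ?thesis by simp
qed

lemma cutwidth_attained:
  assumes "finite V" "finite A"
  obtains \<sigma> where "bij_betw \<sigma> V {1..card V}" "ordering_width V A \<sigma> = cutwidth V A"
proof -
  let ?widths = "{ordering_width V A \<sigma> | \<sigma>. bij_betw \<sigma> V {1..card V}}"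
  have "card (cut A \<sigma> \<alpha>) \<le> card A" for \<sigma> \<alpha>
    using assms(2) cut_subset by (rule card_mono)
  then have "ordering_width V A \<sigma> \<le> card A" for \<sigma>
    unfolding ordering_width_def by (intro Max.boundedI) auto
  then have "?widths \<subseteq> {..card A}" by auto
  then have "finite ?widths" by (rule finite_subset) simp
  moreover obtain \<sigma>\<^sub>0 where "bij_betw \<sigma>\<^sub>0 V {1..card V}"
    using finite_same_card_bij[OF assms(1), of "{1..card V}"] by auto
  then have "?widths \<noteq> {}" by blast
  ultimately have "cutwidth V A \<in> ?widths" unfolding cutwidth_def by (rule Min_in)
  then obtain \<sigma> where "bij_betw \<sigma> V {1..card V}" "ordering_width V A \<sigma> = cutwidth V A" by auto
  then show thesis by (rule that)
qed

theorem lemma17: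
  fixes VH :: "'b set" and AH :: "('b \<times> 'b) set"
    and V :: "'a set" and A :: "('a \<times> 'a) set"
    and k c :: nat
  assumes "simple_digraph VH AH" and "strongly_connected VH AH" and "AH \<noteq> {}"
    and "k \<ge> 1"
    and "tournament V A" and "cutwidth V A \<le> c"
    and "\<not> contains_disjoint_immersions k VH AH V A"
  shows "\<exists>F. F \<subseteq> A \<and> card F \<le> 2 * (k - 1) * c \<and> \<not> contains_immersion VH AH V (A - F)"
proof -
  have "finite V" "A \<subseteq> V \<times> V" "\<And>v. (v, v) \<notin> A"
    using assms(5) unfolding tournament_def simple_digraph_def by auto
  then have "finite A" by (meson finite_SigmaI finite_subset)
  with \<open>finite V\<close> obtain \<sigma> where \<sigma>: "bij_betw \<sigma> V {1..card V}" "ordering_width V A \<sigma> = cutwidth V A"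
    by (rule cutwidth_attained)
  have cuts: "card (cut A \<sigma> \<alpha>) \<le> c" for \<alpha>
    using card_cut_le_ordering_width[OF \<sigma>(1) \<open>A \<subseteq> V \<times> V\<close>, of \<alpha>] \<sigma>(2) assms(6) by simp
  have everything_above_0: "{v \<in> V. 0 < \<sigma> v} = V" using bij_betw_apply[OF \<sigma>(1)] by fastforce
  have "\<not> contains_disjoint_immersions (Suc (k - 1)) VH AH {v \<in> V. 0 < \<sigma> v} A"
    using assms(4,7) everything_above_0 by simp
  from immersion_hitting_set_above[OF assms(1-3) \<open>finite V\<close> bij_betw_imp_inj_on[OF \<sigma>(1)]
      \<open>\<And>v. (v, v) \<notin> A\<close> cuts this]
  show ?thesis unfolding everything_above_0 by blast
qed

end
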